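(* For every $n\ge3$ with $n\neq4$, the unidirectional cycle $\overrightarrow{C_n}$ is $\{0,2\}$-antimagic.
   Context: An oriented graph is a simple graph each of whose edges is given one direction. For vertices $u,v$, $d(u,v)$ is the length of a shortest directed path from $u$ to $v$ ($d(u,u)=0$). For a set $D$ of nonnegative integers, $N_D(v)=\{y : d(v,y)\in D\}$; for a bijection $f:V\to\{1,\dots,|V|\}$, $\omega_D(v)=\sum_{x\in N_D(v)}f(x)$ (empty sum $0$); $f$ is $D$-antimagic if distinct vertices have distinct $D$-weights, and the graph is $D$-antimagic if such an $f$ exists. The unidirectional cycle $\overrightarrow{C_n}$ ($n\ge3$) has vertices $v_1,\dots,v_n$ and arcs $(v_i,v_{i+1})$ for $1\le i\le n-1$ and $(v_n,v_1)$; $d(v_i,v_j)=(j-i)\bmod n$. *)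

theory Defs
  imports Main
begin

(* d(u,v) = k : there is a directed walk of length k from u to v and none shorter.
   (A shortest directed walk is a path; unreachable pairs have no distance.) *)
definition has_dist :: "('a \<times> 'a) set \<Rightarrow> 'a \<Rightarrow> 'a \<Rightarrow> nat \<Rightarrow> bool" where
  "has_dist A u v k \<longleftrightarrow> (u, v) \<in> A ^^ k \<and> (\<forall>j<k. (u, v) \<notin> A ^^ j)"

definition dist_nbhd :: "'a set \<Rightarrow> ('a \<times> 'a) set \<Rightarrow> nat set \<Rightarrow> 'a \<Rightarrow> 'a set" where
  "dist_nbhd V A D v = {y \<in> V. \<exists>k\<in>D. has_dist A v y k}"

definition D_weight :: "'a set \<Rightarrow> ('a \<times> 'a) set \<Rightarrow> nat set \<Rightarrow> ('a \<Rightarrow> nat) \<Rightarrow> 'a \<Rightarrow> nat" where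
  "D_weight V A D f v = (\<Sum>x\<in>dist_nbhd V A D v. f x)"

definition D_antimagic_labeling :: "'a set \<Rightarrow> ('a \<times> 'a) set \<Rightarrow> nat set \<Rightarrow> ('a \<Rightarrow> nat) \<Rightarrow> bool" where
  "D_antimagic_labeling V A D f \<longleftrightarrow>
     bij_betw f V {1..card V} \<and> inj_on (D_weight V A D f) V"

definition D_antimagic :: "'a set \<Rightarrow> ('a \<times> 'a) set \<Rightarrow> nat set \<Rightarrow> bool" where
  "D_antimagic V A D \<longleftrightarrow> (\<exists>f. D_antimagic_labeling V A D f)"

(* Unidirectional cycle on n vertices: vertex v_i is represented by i-1 \<in> {0..<n},
   arcs (i, (i+1) mod n). *)
definition ucycle_V :: "nat \<Rightarrow> nat set" where
  "ucycle_V n = {0..<n}"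

definition ucycle_A :: "nat \<Rightarrow> (nat \<times> nat) set" where
  "ucycle_A n = {(i, (i + 1) mod n) | i. i < n}"

end

theory Submission
  imports Defs
begin

text \<open>
  The \<open>{0,2}\<close>-weight of vertex \<open>i\<close> is \<open>f i + f (i + 2)\<close>, so the labelling must give
  pairwise distinct label sums along the arcs \<open>i \<rightarrow> i + 2\<close> of the square of the cycle.
  For odd \<open>n\<close> the square is again an \<open>n\<close>-cycle (renumber \<open>i\<close> as \<open>i/2 mod n\<close>);
  for \<open>n = 2m\<close> it is two disjoint \<open>m\<close>-cycles, labelled by \<open>b\<close> and \<open>b + m\<close>, whose sums
  lie in disjoint ranges. Both cases reduce to labelling an \<open>m\<close>-cycle, \<open>m \<ge> 3\<close>, by
  \<open>1..m\<close> with distinct sums of consecutive labels: the identity labelling works for odd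
  \<open>m\<close>, and swapping its last two labels works for even \<open>m\<close>. For \<open>n = 4\<close> one would need
  such a labelling of a 2-cycle, which does not exist.
\<close>

lemma add_mod_neq:
  fixes i k l n :: nat
  assumes "l < k" "k < n"
  shows "(i + l) mod n \<noteq> (i + k) mod n"
proof
  assume "(i + l) mod n = (i + k) mod n"
  then have "n dvd (i + k) - (i + l)"
    using \<open>l < k\<close> by (metis mod_eq_dvd_iff_nat add_le_mono1 add.commute less_imp_le)
  then show False
    using assms nat_dvd_not_less[of "k - l" n] by simp
qed

lemma inj_on_add_mod: "inj_on (\<lambda>k. (i + k) mod n) {..<(n::nat)}"
  by (rule inj_onI) (metis add_mod_neq lessThan_iff linorder_neqE_nat)

lemma bij_betw_if_inj_on_card:
  assumes "inj_on f A" "f ` A \<subseteq> B" "finite B" "card A = card B"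
  shows "bij_betw f A B"
  using assms by (simp add: bij_betw_def card_image card_subset_eq)

lemma inj_on_add_mult_block:
  fixes g :: "'a \<Rightarrow> nat"
  assumes "inj_on g A" and range: "\<And>p. p \<in> A \<Longrightarrow> lo \<le> g p \<and> g p < lo + K"
  shows "inj_on (\<lambda>(p, c). g p + K * c) (A \<times> C)"
proof (rule inj_onI, clarify)
  fix p c q d
  assume "p \<in> A" "q \<in> A" and eq: "g p + K * c = g q + K * d"
  obtain u v where u: "g p = lo + u" "u < K" and v: "g q = lo + v" "v < K"
    using range[OF \<open>p \<in> A\<close>] range[OF \<open>q \<in> A\<close>] by (metis add_less_cancel_left le_Suc_ex)
  have "u + K * c = v + K * d"
    using eq u v by simp
  then have "(u + K * c) mod K = (v + K * d) mod K"
    by simp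
  then have "u = v"
    using u v by simp
  then have "p = q"
    using u v \<open>inj_on g A\<close> \<open>p \<in> A\<close> \<open>q \<in> A\<close> by (simp add: inj_on_def)
  moreover have "c = d"
    using eq \<open>p = q\<close> \<open>u < K\<close> by simp
  ultimately show "p = q \<and> c = d" ..
qed

lemma relpow_ucycle_A:
  assumes "i < n"
  shows "(i, j) \<in> ucycle_A n ^^ k \<longleftrightarrow> j = (i + k) mod n"
proof (induction k arbitrary: j)
  case 0
  then show ?case using assms by auto
next
  case (Suc k)
  have "(i, j) \<in> ucycle_A n ^^ Suc k \<longleftrightarrow> ((i + k) mod n, j) \<in> ucycle_A n"
    using Suc.IH by auto
  also have "\<dots> \<longleftrightarrow> j = (i + Suc k) mod n"
    using assms by (auto simp: ucycle_A_def mod_Suc_eq)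
  finally show ?case .
qed

lemma has_dist_ucycle_A:
  assumes "i < n"
  shows "has_dist (ucycle_A n) i j k \<longleftrightarrow> k < n \<and> j = (i + k) mod n"
proof -
  have "(\<forall>l<k. (i + k) mod n \<noteq> (i + l) mod n) \<longleftrightarrow> k < n"
  proof
    assume no_repeat: "\<forall>l<k. (i + k) mod n \<noteq> (i + l) mod n"
    show "k < n"
    proof (rule ccontr)
      assume "\<not> k < n"
      then have "k - n < k" and "i + k = (i + (k - n)) + n"
        using assms by auto
      moreover from this(2) have "(i + (k - n)) mod n = (i + k) mod n"
        by (metis mod_add_self2)
      ultimately show False using no_repeat by metis
    qed
  next
    assume "k < n"
    then show "\<forall>l<k. (i + k) mod n \<noteq> (i + l) mod n"
      using add_mod_neq by metis
  qed
  then show ?thesis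
    unfolding has_dist_def relpow_ucycle_A[OF assms] by auto
qed

lemma dist_nbhd_ucycle:
  assumes "D \<subseteq> {..<n}" "i < n"
  shows "dist_nbhd (ucycle_V n) (ucycle_A n) D i = (\<lambda>k. (i + k) mod n) ` D"
  using assms by (auto simp: dist_nbhd_def ucycle_V_def has_dist_ucycle_A)

lemma D_weight_ucycle:
  assumes "D \<subseteq> {..<n}" "i < n"
  shows "D_weight (ucycle_V n) (ucycle_A n) D f i = (\<Sum>k\<in>D. f ((i + k) mod n))"
proof -
  have "inj_on (\<lambda>k. (i + k) mod n) D"
    using inj_on_subset[OF inj_on_add_mod assms(1)] .
  then show ?thesis
    unfolding D_weight_def dist_nbhd_ucycle[OF assms] by (simp add: sum.reindex)
qed

lemma D_antimagic_labeling_ucycle_0k: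
  assumes "0 < k" "k < n"
  shows "D_antimagic_labeling (ucycle_V n) (ucycle_A n) {0, k} f \<longleftrightarrow>
    bij_betw f {0..<n} {1..n} \<and> inj_on (\<lambda>i. f i + f ((i + k) mod n)) {0..<n}"
proof -
  have "D_weight (ucycle_V n) (ucycle_A n) {0, k} f i = f i + f ((i + k) mod n)" if "i < n" for i
    using assms that by (simp add: D_weight_ucycle)
  then have "inj_on (D_weight (ucycle_V n) (ucycle_A n) {0, k} f) {0..<n} \<longleftrightarrow>
      inj_on (\<lambda>i. f i + f ((i + k) mod n)) {0..<n}"
    by (intro inj_on_cong) auto
  then show ?thesis
    by (simp add: D_antimagic_labeling_def ucycle_V_def)
qed

lemma ucycle_01_antimagic_odd:
  assumes "3 \<le> m" "odd m"
  shows "D_antimagic (ucycle_V m) (ucycle_A m) {0, 1}"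
proof -
  have "bij_betw Suc {0..<m} {1..m}"
    by (simp add: bij_betw_Suc atLeastLessThanSuc_atLeastAtMost)
  moreover have "inj_on (\<lambda>p. Suc p + Suc ((p + 1) mod m)) {0..<m}"
  proof (rule inj_onI)
    have sum: "Suc p + Suc ((p + 1) mod m) = (if p + 1 < m then 2 * p + 3 else m + 1)"
      if "p < m" for p
      using that by (auto simp: mod_if)
    fix p q
    assume "p \<in> {0..<m}" "q \<in> {0..<m}"
      and "Suc p + Suc ((p + 1) mod m) = Suc q + Suc ((q + 1) mod m)"
    then show "p = q"
      using sum[of p] sum[of q] \<open>odd m\<close> by (auto split: if_splits; presburger)
  qed
  ultimately show ?thesis
    unfolding D_antimagic_def using D_antimagic_labeling_ucycle_0k[of 1 m Suc] assms by auto
qed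

lemma ucycle_01_antimagic_even:
  assumes "3 \<le> m" "even m"
  shows "D_antimagic (ucycle_V m) (ucycle_A m) {0, 1}"
proof -
  have "4 \<le> m" using assms by presburger
  define b where "b p = (if p + 2 < m then p + 1 else if p + 2 = m then m else m - 1)" for p
  have b_low: "b p = p + 1" if "p + 2 < m" for p
    using that by (auto simp: b_def)
  have b_top: "b (m - 2) = m" "b (m - 1) = m - 1"
    using \<open>4 \<le> m\<close> by (simp_all add: b_def)
  have "bij_betw b {0..<m} {1..m}"
    by (rule bij_betw_if_inj_on_card)
      (use \<open>4 \<le> m\<close> in \<open>auto simp: b_def inj_on_def split: if_splits\<close>)
  moreover have "inj_on (\<lambda>p. b p + b ((p + 1) mod m)) {0..<m}"
  proof (rule inj_onI)
    define c where "c p = (if p + 3 < m then 2 * p + 3 else if p + 3 = m then 2 * m - 2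
         else if p + 2 = m then 2 * m - 1 else m)" for p
    have sum: "b p + b ((p + 1) mod m) = c p" if "p < m" for p
    proof -
      consider "p + 3 < m" | "p + 3 = m" | "p + 2 = m" | "p + 1 = m"
        using \<open>p < m\<close> by linarith
      then show ?thesis
      proof cases
        case 1
        then show ?thesis using b_low[of p] b_low[of "p + 1"] by (simp add: c_def)
      next
        case 2
        then have "p + 1 = m - 2" by simp
        then show ?thesis using 2 b_low[of p] b_top by (simp add: c_def)
      next
        case 3
        then have "p = m - 2" "p + 1 = m - 1" by simp_all
        then show ?thesis using 3 b_top by (simp add: c_def)
      next
        case 4
        then have "p = m - 1" "(p + 1) mod m = 0" by simp_all
        then show ?thesis using 4 b_top b_low[of 0] \<open>4 \<le> m\<close> by (simp add: c_def)
      qed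
    qed
    fix p q
    assume "p \<in> {0..<m}" "q \<in> {0..<m}"
      and "b p + b ((p + 1) mod m) = b q + b ((q + 1) mod m)"
    then have "c p = c q" using sum by simp
    then show "p = q"
      using \<open>p \<in> {0..<m}\<close> \<open>q \<in> {0..<m}\<close> \<open>even m\<close> \<open>4 \<le> m\<close>
      unfolding c_def by (auto split: if_splits)
  qed
  ultimately show ?thesis
    unfolding D_antimagic_def using D_antimagic_labeling_ucycle_0k[of 1 m b] assms by auto
qed

lemma ucycle_01_antimagic:
  assumes "3 \<le> m"
  shows "D_antimagic (ucycle_V m) (ucycle_A m) {0, 1}"
  using assms ucycle_01_antimagic_odd ucycle_01_antimagic_even by blast

lemma ucycle_consecutive_sums_labelingE:
  fixes m :: nat
  assumes "3 \<le> m"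
  obtains b where "bij_betw b {0..<m} {1..m}"
    and "inj_on (\<lambda>p. b p + b ((p + 1) mod m)) {0..<m}"
proof -
  obtain b where "D_antimagic_labeling (ucycle_V m) (ucycle_A m) {0, 1} b"
    using ucycle_01_antimagic[OF assms] unfolding D_antimagic_def ..
  then show ?thesis
    using that D_antimagic_labeling_ucycle_0k[of 1 m b] assms by auto
qed

lemma ucycle_0k_antimagic_transfer:
  assumes "0 < k" "k < n"
    and \<pi>: "bij_betw \<pi> {0..<n} Q" and b: "bij_betw b Q {1..n}"
    and step: "\<And>i. i < n \<Longrightarrow> \<pi> ((i + k) mod n) = s (\<pi> i)"
    and sums: "inj_on (\<lambda>q. b q + b (s q)) Q"
  shows "D_antimagic (ucycle_V n) (ucycle_A n) {0, k}"
proof -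
  have "bij_betw (b \<circ> \<pi>) {0..<n} {1..n}"
    using \<pi> b by (rule bij_betw_trans)
  moreover have "inj_on ((\<lambda>q. b q + b (s q)) \<circ> \<pi>) {0..<n}"
    using \<pi> sums by (simp add: bij_betw_def comp_inj_on)
  then have "inj_on (\<lambda>i. (b \<circ> \<pi>) i + (b \<circ> \<pi>) ((i + k) mod n)) {0..<n}"
    by (rule inj_on_cong[THEN iffD1, rotated]) (simp add: step)
  ultimately show ?thesis
    unfolding D_antimagic_def using D_antimagic_labeling_ucycle_0k[of k n] assms(1,2) by blast
qed

lemma ucycle_02_antimagic_odd:
  assumes "3 \<le> n" "odd n"
  shows "D_antimagic (ucycle_V n) (ucycle_A n) {0, 2}"
proof -
  obtain b where b: "bij_betw b {0..<n} {1..n}"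
    and sums: "inj_on (\<lambda>p. b p + b ((p + 1) mod n)) {0..<n}"
    using ucycle_consecutive_sums_labelingE[OF assms(1)] .
  define h where "h = (n + 1) div 2"
  have "2 * h = n + 1"
    using \<open>odd n\<close> by (simp add: h_def)
  define \<pi> where "\<pi> i = (i * h) mod n" for i
  have halve: "(2 * \<pi> i) mod n = i" if "i < n" for i
  proof -
    have "(2 * \<pi> i) mod n = (i * (2 * h)) mod n"
      by (simp add: \<pi>_def mod_mult_right_eq ac_simps)
    also have "\<dots> = i"
      using that unfolding \<open>2 * h = n + 1\<close> by (simp add: algebra_simps)
    finally show ?thesis .
  qed
  have "bij_betw \<pi> {0..<n} {0..<n}"
  proof (rule bij_betw_if_inj_on_card)
    show "inj_on \<pi> {0..<n}"
      by (rule inj_onI) (metis atLeastLessThan_iff halve)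
  qed (use assms in \<open>auto simp: \<pi>_def\<close>)
  moreover have "\<pi> ((i + 2) mod n) = (\<pi> i + 1) mod n" for i
  proof -
    have "\<pi> ((i + 2) mod n) = (i * h + 2 * h) mod n"
      by (simp only: \<pi>_def mod_mult_left_eq add_mult_distrib)
    also have "\<dots> = (i * h + 1 + n) mod n"
      using \<open>2 * h = n + 1\<close> by simp
    also have "\<dots> = (\<pi> i + 1) mod n"
      by (simp only: \<pi>_def mod_add_self2 mod_add_left_eq)
    finally show ?thesis .
  qed
  ultimately show ?thesis
    using assms b sums by (intro ucycle_0k_antimagic_transfer) auto
qed

lemma ucycle_02_antimagic_even:
  assumes "3 \<le> m"
  shows "D_antimagic (ucycle_V (2 * m)) (ucycle_A (2 * m)) {0, 2}"
proof -
  obtain b where b: "bij_betw b {0..<m} {1..m}"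
    and sums: "inj_on (\<lambda>p. b p + b ((p + 1) mod m)) {0..<m}"
    using ucycle_consecutive_sums_labelingE[OF assms] .
  have b_range: "b p \<in> {1..m}" if "p < m" for p
    using b that by (auto simp: bij_betw_def)
  define Q where "Q = {0..<m} \<times> {0..<2::nat}"
  define \<pi> where "\<pi> i = (i div 2, i mod 2)" for i :: nat
  define s where "s = (\<lambda>(p, c :: nat). ((p + 1) mod m, c))"
  define B where "B = (\<lambda>(p, c). b p + m * c)"
  have "bij_betw \<pi> {0..<2 * m} Q"
  proof (rule bij_betw_if_inj_on_card)
    show "inj_on \<pi> {0..<2 * m}"
      by (rule inj_onI) (metis \<pi>_def div_mult_mod_eq prod.inject)
  qed (auto simp: \<pi>_def Q_def)
  moreover have "bij_betw B Q {1..2 * m}"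
  proof (rule bij_betw_if_inj_on_card)
    show "inj_on B Q"
      unfolding B_def Q_def
    proof (rule inj_on_add_mult_block[where lo = 1])
      show "inj_on b {0..<m}"
        using b by (simp add: bij_betw_def)
      show "1 \<le> b p \<and> b p < 1 + m" if "p \<in> {0..<m}" for p
        using b_range[of p] that by auto
    qed
    show "B ` Q \<subseteq> {1..2 * m}"
    proof
      fix y
      assume "y \<in> B ` Q"
      then obtain p c where "p < m" "c < 2" "y = b p + m * c"
        by (auto simp: B_def Q_def)
      then show "y \<in> {1..2 * m}"
        using b_range[of p] by (auto simp: less_2_cases_iff)
    qed
  qed (auto simp: Q_def)
  moreover have "\<pi> ((i + 2) mod (2 * m)) = s (\<pi> i)" for i
  proof -
    have "(i + 2) mod (2 * m) = 2 * ((i div 2 + 1) mod m) + i mod 2"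
      by (simp add: mod_mult2_eq)
    then show ?thesis
      by (simp add: \<pi>_def s_def)
  qed
  moreover have "inj_on (\<lambda>q. B q + B (s q)) Q"
  proof -
    define g where "g p = b p + b ((p + 1) mod m)" for p
    have "g p \<ge> 2 \<and> g p < 2 + 2 * m" if "p < m" for p
      using b_range[OF that] b_range[of "(p + 1) mod m"] assms by (simp add: g_def)
    then have "inj_on (\<lambda>(p, c). g p + 2 * m * c) Q"
      unfolding Q_def using sums
      by (intro inj_on_add_mult_block[where lo = 2]) (auto simp: g_def)
    moreover have "B q + B (s q) = (\<lambda>(p, c). g p + 2 * m * c) q" for q
      by (cases q) (simp add: B_def s_def g_def)
    ultimately show ?thesis
      by simp
  qed
  ultimately show ?thesis
    using assms by (intro ucycle_0k_antimagic_transfer[where k = 2]) auto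
qed

theorem mainTheorem12:
  fixes n :: nat
  assumes "n \<ge> 3" and "n \<noteq> 4"
  shows "D_antimagic (ucycle_V n) (ucycle_A n) {0, 2}"
proof (cases "odd n")
  case True
  with assms(1) show ?thesis
    by (rule ucycle_02_antimagic_odd)
next
  case False
  then obtain m where "n = 2 * m"
    by blast
  moreover from this have "3 \<le> m"
    using assms by auto
  ultimately show ?thesis
    using ucycle_02_antimagic_even by blast
qed

end
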